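(* Let $n\ge1$, $q\ge2$ be integers, $b\in\{1,\dots,q-1\}$, $c=\lceil q/b\rceil$ and $d=cb-q$. Let $a\in\{0,\dots,q-1\}$ be unknown and let $\mathbf k\in\mathbb Z_q^n$ be an unknown key having at least one entry that is a unit modulo $q$. Given one query to the quantum oracle $U_{\mathsf{LRF}}:|\mathbf x\rangle|z\rangle\mapsto|\mathbf x\rangle|z+\mathsf{LRF}_{\mathbf k,a,b}(\mathbf x)\bmod c\rangle$ ($\mathbf x\in\mathbb Z_q^n$, $z\in\mathbb Z_c$), the following algorithm outputs $\mathbf k$ with probability at least $4/\pi^2-O(d/q)$: (1) prepare $\frac{1}{\sqrt{q^n}}\sum_{\mathbf x\in\mathbb Z_q^n}|\mathbf x\rangle\otimes\frac{1}{\sqrt c}\sum_{z=0}^{c-1}\omega_c^z|z\rangle$ with $\omega_c=e^{2\pi i/c}$; (2) apply $U_{\mathsf{LRF}}$ once; (3) discard the last register and apply $\mathsf{QFT}_{\mathbb Z_q}^{\otimes n}$; (4) measure in the computational basis and output the outcome.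
   Context: For $a\in\mathbb Z_q$, $b\in\mathbb Z_q\setminus\{0\}$, $c=\lceil q/b\rceil$, partition $\mathbb Z_q$ into blocks $I_v(a,b)=\{a+vb,\dots,a+vb+b-1\}$ (mod $q$) for $v\in\{0,\dots,c-2\}$ and $I_{c-1}(a,b)=\{a+(c-1)b,\dots,a+q-1\}$ (mod $q$). The linear rounding function with key $\mathbf k\in\mathbb Z_q^n$ is $\mathsf{LRF}_{\mathbf k,a,b}:\mathbb Z_q^n\to\mathbb Z_c$, $\mathsf{LRF}_{\mathbf k,a,b}(\mathbf x)=v$ iff $\langle\mathbf x,\mathbf k\rangle\in I_v(a,b)$, where $\langle\cdot,\cdot\rangle$ is the inner product modulo $q$. The quantum Fourier transform over $\mathbb Z_q$ is $\mathsf{QFT}_{\mathbb Z_q}|x\rangle=\frac{1}{\sqrt q}\sum_{y\in\mathbb Z_q}e^{2\pi i xy/q}|y\rangle$. *)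

theory Defs
  imports Complex_Main
begin

text \<open>Elements of Z_q^n are represented as lists of length n with entries in {0..<q}.\<close>
definition vecs :: "nat \<Rightarrow> nat \<Rightarrow> nat list set" where
  "vecs n q = {xs. length xs = n \<and> set xs \<subseteq> {..<q}}"

definition ip :: "nat \<Rightarrow> nat list \<Rightarrow> nat list \<Rightarrow> nat" where
  "ip q xs ks = (\<Sum>i<length xs. xs ! i * ks ! i) mod q"

definition lrf_c :: "nat \<Rightarrow> nat \<Rightarrow> nat" where
  "lrf_c q b = nat \<lceil>real q / real b\<rceil>"

definition block :: "nat \<Rightarrow> nat \<Rightarrow> nat \<Rightarrow> nat \<Rightarrow> nat set" where
  "block q a b v =
     (if v + 2 \<le> lrf_c q b then {(a + v * b + j) mod q | j. j < b}
      else {(a + v * b + j) mod q | j. j < q - v * b})"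

definition LRF :: "nat \<Rightarrow> nat list \<Rightarrow> nat \<Rightarrow> nat \<Rightarrow> nat list \<Rightarrow> nat" where
  "LRF q k a b x = (THE v. v < lrf_c q b \<and> ip q x k \<in> block q a b (v::nat))"

definition init_state :: "nat \<Rightarrow> nat \<Rightarrow> nat \<Rightarrow> nat list \<times> nat \<Rightarrow> complex" where
  "init_state n q c = (\<lambda>(x, z).
     if x \<in> vecs n q \<and> z < c then
       complex_of_real (1 / sqrt (real q ^ n)) * complex_of_real (1 / sqrt (real c))
       * exp (2 * pi * \<i> * of_nat z / of_nat c)
     else 0)"

definition apply_oracle :: "(nat list \<Rightarrow> nat) \<Rightarrow> nat \<Rightarrow> (nat list \<times> nat \<Rightarrow> complex)
    \<Rightarrow> nat list \<times> nat \<Rightarrow> complex" where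
  "apply_oracle f c \<psi> = (\<lambda>(x, z'). \<Sum>z<c. if (z + f x) mod c = z' then \<psi> (x, z) else 0)"

definition qft_coef :: "nat \<Rightarrow> nat \<Rightarrow> nat list \<Rightarrow> nat list \<Rightarrow> complex" where
  "qft_coef n q y x =
     (\<Prod>i<n. complex_of_real (1 / sqrt (real q)) * exp (2 * pi * \<i> * of_nat (x ! i * y ! i) / of_nat q))"

text \<open>Probability that measuring the first register (after discarding the second one and
  applying QFT^{\<otimes> n} to the first) yields y: the marginal of the joint state
  (QFT^{\<otimes> n} \<otimes> I) \<psi>.\<close>
definition outcome_prob :: "nat \<Rightarrow> nat \<Rightarrow> nat \<Rightarrow> (nat list \<times> nat \<Rightarrow> complex) \<Rightarrow> nat list \<Rightarrow> real" where
  "outcome_prob n q c \<psi> y = (\<Sum>z<c. (cmod (\<Sum>x\<in>vecs n q. qft_coef n q y x * \<psi> (x, z)))\<^sup>2)"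

definition success_prob :: "nat \<Rightarrow> nat \<Rightarrow> nat \<Rightarrow> nat \<Rightarrow> nat list \<Rightarrow> real" where
  "success_prob n q a b k =
     (let c = lrf_c q b in
      outcome_prob n q c (apply_oracle (LRF q k a b) c (init_state n q c)) k)"

end

theory Submission
  imports Defs "HOL-Analysis.Complex_Transcendental" "HOL-Number_Theory.Cong"
begin

text \<open>
  Write w_m = exp(2 pi i / m) and d = c b - q. The second register sum_z w_c^z |z> is an
  eigenvector of every cyclic shift, so the oracle merely multiplies |x> by w_c^(-LRF(x))
  (phase kickback), and the amplitude of the outcome k is q^(-n) sum_x w_q^<x,k> w_c^(-LRF(x)).
  Since k has a unit entry, <x,k> is equidistributed on Z_q, which reduces the amplitude to
  q^(-1) sum_(s<q) w_q^s w_c^(-floor((s-a)/b)). After the shift s = a + t, the t-th term is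
  within 2 pi d/q of w_q^(t mod b); the sum of the latter over t < c b is c times a geometric
  sum of modulus at least c q sin(pi b/q)/pi >= q (2 - pi d/q)/pi, because c sin(pi/c) >= 2
  and sin is 1-Lipschitz. Hence the amplitude is at least 2/pi - O(d/q).
\<close>

section \<open>The number of blocks\<close>

definition lrf_d :: "nat \<Rightarrow> nat \<Rightarrow> real" where
  "lrf_d q b = real (lrf_c q b * b) - real q"

lemma lrf_c_mult_bounds:
  assumes "0 < b"
  shows "q \<le> lrf_c q b * b" and "lrf_c q b * b < q + b"
proof -
  have "0 \<le> real q / real b" by simp
  then have "real (lrf_c q b) = of_int \<lceil>real q / real b\<rceil>" unfolding lrf_c_def by linarith
  moreover have "real q \<le> of_int \<lceil>real q / real b\<rceil> * real b"
    and "(of_int \<lceil>real q / real b\<rceil> - 1) * real b < real q"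
    using assms by (simp_all add: ceiling_divide_upper ceiling_divide_lower)
  ultimately have "real q \<le> real (lrf_c q b * b)" and "real (lrf_c q b * b) < real (q + b)"
    by (simp_all add: algebra_simps)
  then show "q \<le> lrf_c q b * b" and "lrf_c q b * b < q + b"
    by (simp_all only: of_nat_le_iff of_nat_less_iff)
qed

lemma lrf_c_ge_2:
  assumes "0 < b" "b < q"
  shows "2 \<le> lrf_c q b"
proof -
  have "1 * b < lrf_c q b * b" using lrf_c_mult_bounds(1)[OF assms(1), of q] assms(2) by linarith
  then have "1 < lrf_c q b" by (simp only: mult_less_cancel2)
  then show ?thesis by simp
qed

lemma lrf_d_nonneg:
  assumes "0 < b"
  shows "0 \<le> lrf_d q b"
proof -
  have "real q \<le> real (lrf_c q b * b)" using lrf_c_mult_bounds(1)[OF assms] by (simp only: of_nat_le_iff)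
  then show ?thesis unfolding lrf_d_def by linarith
qed

section \<open>The linear rounding function\<close>

lemma mod_add_diff_mod_cancel:
  fixes s q a :: nat
  assumes "s < q" "a \<le> q"
  shows "(a + (s + q - a) mod q) mod q = s"
proof -
  have "(a + (s + q - a) mod q) mod q = (a + (s + q - a)) mod q" by (rule mod_add_right_eq)
  also have "a + (s + q - a) = s + q" using assms by simp
  finally show ?thesis using assms by simp
qed

lemma add_mod_diff_mod_cancel:
  fixes m q a :: nat
  assumes "m < q" "a < q"
  shows "((a + m) mod q + q - a) mod q = m"
proof (cases "a + m < q")
  case True
  then have "(a + m) mod q + q - a = m + q" by simp
  then show ?thesis using assms by simp
next
  case False
  then have "(a + m) mod q + q - a = m" using assms by (simp add: mod_if)
  then show ?thesis using assms by simp
qed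

lemma shift_mod_eq_iff:
  fixes m q a s :: nat
  assumes "m < q" "a < q" "s < q"
  shows "s = (a + m) mod q \<longleftrightarrow> (s + q - a) mod q = m"
proof
  assume "s = (a + m) mod q"
  then show "(s + q - a) mod q = m" using add_mod_diff_mod_cancel[OF assms(1,2)] by simp
next
  assume "(s + q - a) mod q = m"
  then show "s = (a + m) mod q" using mod_add_diff_mod_cancel[of s q a] assms by simp
qed

lemma mem_block_iff:
  assumes "0 < b" "a < q" "s < q" "v < lrf_c q b"
  shows "s \<in> block q a b v \<longleftrightarrow> v = ((s + q - a) mod q) div b"
proof -
  define c where "c = lrf_c q b"
  define t where "t = (s + q - a) mod q"
  define l where "l = (if v + 2 \<le> c then b else q - v * b)"
  have cb: "q \<le> c * b" "c * b < q + b" unfolding c_def using lrf_c_mult_bounds assms(1) by auto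
  have "v * b + l \<le> q \<and> l \<le> b"
  proof (cases "v + 2 \<le> c")
    case True
    then have "(v + 1) * b \<le> (c - 1) * b" by (intro mult_le_mono1) simp
    then show ?thesis using True cb by (auto simp: l_def diff_mult_distrib)
  next
    case False
    then have "c = v + 1" using assms(4) c_def by simp
    then show ?thesis using False cb by (auto simp: l_def)
  qed
  then have fits: "v * b + l \<le> q" and l_le: "l \<le> b" by auto
  have "s \<in> block q a b v \<longleftrightarrow> (\<exists>j<l. s = (a + (v * b + j)) mod q)"
    unfolding block_def l_def c_def by (auto simp: add.assoc)
  also have "\<dots> \<longleftrightarrow> (\<exists>j<l. t = v * b + j)"
    using fits shift_mod_eq_iff[OF _ assms(2,3)] unfolding t_def
    by (metis add_less_cancel_left less_le_trans)
  also have "\<dots> \<longleftrightarrow> v * b \<le> t \<and> t < v * b + l"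
    by (metis le_add1 le_add_diff_inverse nat_add_left_cancel_less)
  also have "\<dots> \<longleftrightarrow> v = t div b"
  proof
    assume "v * b \<le> t \<and> t < v * b + l"
    then show "v = t div b" using l_le by (intro div_nat_eqI[symmetric]) (auto simp: mult.commute)
  next
    assume v: "v = t div b"
    have "t < q" unfolding t_def using assms(3) by simp
    moreover have "t < v * b + b"
      unfolding v using mod_less_divisor[OF assms(1), of t] div_mult_mod_eq[of t b] by linarith
    ultimately show "v * b \<le> t \<and> t < v * b + l"
      using v fits by (auto simp: l_def)
  qed
  finally show ?thesis unfolding t_def .
qed

lemma LRF_eq:
  assumes "0 < b" "a < q"
  shows "LRF q k a b x = ((ip q x k + q - a) mod q) div b"
proof -
  define s where "s = ip q x k"
  have s: "s < q" using assms unfolding s_def ip_def by simp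
  have "(s + q - a) mod q < q" using assms(2) by simp
  also have "q \<le> lrf_c q b * b" using lrf_c_mult_bounds(1)[OF assms(1)] .
  finally have "(s + q - a) mod q div b < lrf_c q b" by (rule less_mult_imp_div_less)
  then show ?thesis
    unfolding LRF_def s_def[symmetric] using mem_block_iff[OF assms s] by (intro the_equality) auto
qed

section \<open>Roots of unity\<close>

lemma cis_mod:
  assumes "0 < c"
  shows "cis (2 * pi * real (m mod c) / real c) = cis (2 * pi * real m / real c)"
proof -
  have "real m = real (m div c) * real c + real (m mod c)"
    by (metis div_mult_mod_eq of_nat_add of_nat_mult)
  then have "2 * pi * real m / real c = 2 * pi * real (m div c) + 2 * pi * real (m mod c) / real c"
    using assms by (simp add: field_simps)
  then show ?thesis by (simp add: cis_mult[symmetric])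
qed

lemma exp_eq_cis_frac:
  "exp (complex_of_real (2 * pi) * \<i> * of_nat z / of_nat c) = cis (2 * pi * real z / real c)"
  unfolding cis_conv_exp by (rule arg_cong[where f = exp]) (simp add: divide_inverse mult_ac)

lemma prod_cis: "(\<Prod>i\<in>A. cis (f i)) = cis (\<Sum>i\<in>A. f i)"
  by (induct A rule: infinite_finite_induct) (simp_all add: cis_mult)

lemma norm_cis_minus_1: "cmod (cis t - 1) = 2 * \<bar>sin (t / 2)\<bar>"
  unfolding cis_conv_exp by (rule dist_exp_i_1)

lemma norm_cis_diff_le: "cmod (cis x - cis y) \<le> \<bar>x - y\<bar>"
proof -
  have "cis x - cis y = cis y * (cis (x - y) - 1)" by (simp add: algebra_simps cis_mult)
  then have "cmod (cis x - cis y) = 2 * \<bar>sin ((x - y) / 2)\<bar>" by (simp add: norm_mult norm_cis_minus_1)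
  also have "\<dots> \<le> \<bar>x - y\<bar>" using abs_sin_x_le_abs_x[of "(x - y) / 2"] by simp
  finally show ?thesis .
qed

lemma abs_sin_diff_le:
  fixes x y :: real
  shows "\<bar>sin x - sin y\<bar> \<le> \<bar>x - y\<bar>"
proof -
  have "\<bar>sin x - sin y\<bar> = 2 * \<bar>sin ((x - y) / 2)\<bar> * \<bar>cos ((x + y) / 2)\<bar>"
    by (simp add: sin_diff_sin abs_mult)
  also have "\<dots> \<le> 2 * \<bar>sin ((x - y) / 2)\<bar>" by (simp add: mult_left_le)
  also have "\<dots> \<le> \<bar>x - y\<bar>" using abs_sin_x_le_abs_x[of "(x - y) / 2"] by simp
  finally show ?thesis .
qed

lemma two_le_mult_sin_pi_div:
  assumes "2 \<le> c"
  shows "2 \<le> real c * sin (pi / real c)"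
proof (cases "c = 2")
  case False
  then have c3: "3 \<le> real c" using assms by simp
  define x where "x = pi / real c"
  have "(\<Sum>m<3. sin_coeff m * x ^ m) = x" by (simp add: numeral_3_eq_3 sin_coeff_def)
  moreover have "inverse (fact 3) * \<bar>x\<bar> ^ 3 = x ^ 3 / 6"
    unfolding x_def by (simp add: numeral_3_eq_3 field_simps)
  ultimately have "\<bar>sin x - x\<bar> \<le> x ^ 3 / 6" using Maclaurin_sin_bound[of x 3] by simp
  then have "x - x ^ 3 / 6 \<le> sin x" unfolding abs_le_iff by linarith
  then have "real c * (x - x ^ 3 / 6) \<le> real c * sin x" using c3 by (intro mult_left_mono) auto
  also have "real c * (x - x ^ 3 / 6) = pi - pi ^ 3 / (6 * real c ^ 2)"
    unfolding x_def using c3 by (simp add: field_simps power2_eq_square power3_eq_cube)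
  finally have "pi - pi ^ 3 / (6 * real c ^ 2) \<le> real c * sin x" .
  moreover have "pi ^ 3 / (6 * real c ^ 2) \<le> 3.15 ^ 3 / (6 * 3 ^ 2)"
    using c3 pi_approx(2) by (intro frac_le power_mono mult_left_mono) auto
  moreover have "(3.15::real) ^ 3 / (6 * 3 ^ 2) < 0.6" by (simp add: power3_eq_cube)
  ultimately show ?thesis using pi_gt3 unfolding x_def by linarith
qed simp

lemma norm_sum_cis_ge:
  assumes "2 \<le> q"
  shows "real q * \<bar>sin (pi * real b / real q)\<bar> / pi \<le> cmod (\<Sum>j<b. cis (2 * pi * real j / real q))"
proof -
  define w where "w = cis (2 * pi / real q)"
  have pw: "cis (2 * pi * real j / real q) = w ^ j" for j
    unfolding w_def Complex.DeMoivre by (simp add: field_simps)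
  have "0 < sin (pi / real q)" using assms by (intro sin_gt_zero) (auto simp: field_simps)
  then have nw_pos: "0 < cmod (w - 1)" unfolding w_def norm_cis_minus_1 by simp
  then have w1: "w \<noteq> 1" by auto
  have nw: "cmod (w - 1) \<le> 2 * pi / real q"
    using norm_cis_diff_le[of "2 * pi / real q" 0] unfolding w_def by simp
  have "(\<Sum>j<b. cis (2 * pi * real j / real q)) = (w ^ b - 1) / (w - 1)"
    unfolding pw by (rule geometric_sum[OF w1])
  then have "cmod (\<Sum>j<b. cis (2 * pi * real j / real q)) = 2 * \<bar>sin (pi * real b / real q)\<bar> / cmod (w - 1)"
    unfolding w_def Complex.DeMoivre by (simp add: norm_divide norm_cis_minus_1 field_simps)
  also have "\<dots> \<ge> 2 * \<bar>sin (pi * real b / real q)\<bar> / (2 * pi / real q)"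
    using nw nw_pos assms by (intro divide_left_mono) auto
  finally show ?thesis using assms by (simp add: field_simps)
qed

lemma sum_mod_periodic:
  fixes g :: "nat \<Rightarrow> 'a::semiring_1"
  shows "(\<Sum>t<c * b. g (t mod b)) = of_nat c * (\<Sum>j<b. g j)"
proof -
  have "(\<Sum>t<c * b. g (t mod b)) = (\<Sum>m<c. \<Sum>t\<in>{m * b..<m * b + b}. g (t mod b))"
    by (rule sum.nat_group[symmetric])
  also have "\<dots> = (\<Sum>m<c. \<Sum>j<b. g j)"
  proof (rule sum.cong[OF refl])
    fix m
    have "(\<Sum>t\<in>{m * b..<m * b + b}. g (t mod b)) = (\<Sum>j<b. g ((j + m * b) mod b))"
      using sum.shift_bounds_nat_ivl[of "\<lambda>t. g (t mod b)" 0 "m * b" b]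
      by (simp add: atLeast0LessThan add.commute)
    then show "(\<Sum>t\<in>{m * b..<m * b + b}. g (t mod b)) = (\<Sum>j<b. g j)" by simp
  qed
  finally show ?thesis by simp
qed

lemma sum_rotate_mod:
  fixes h :: "nat \<Rightarrow> 'a::comm_monoid_add"
  assumes "0 < q"
  shows "(\<Sum>m<q. h ((s + m) mod q)) = (\<Sum>m<q. h m)"
proof -
  have inj: "inj_on (\<lambda>m. (s + m) mod q) {..<q}"
  proof (rule inj_onI)
    fix m1 m2 assume m: "m1 \<in> {..<q}" "m2 \<in> {..<q}" "(s + m1) mod q = (s + m2) mod q"
    then have "[m1 = m2] (mod q)" using cong_add_lcancel_nat unfolding cong_def by blast
    then show "m1 = m2" using m unfolding cong_def by simp
  qed
  moreover have "(\<lambda>m. (s + m) mod q) ` {..<q} \<subseteq> {..<q}" using assms by auto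
  ultimately have "bij_betw (\<lambda>m. (s + m) mod q) {..<q} {..<q}"
    by (simp add: bij_betw_def endo_inj_surj)
  then show ?thesis by (rule sum.reindex_bij_betw)
qed

section \<open>The success probability\<close>

lemma apply_oracle_init_state:
  assumes "x \<in> vecs n q" "z < c"
  shows "apply_oracle f c (init_state n q c) (x, z) =
    complex_of_real (1 / sqrt (real q ^ n) * (1 / sqrt (real c)))
      * cis (2 * pi * real z / real c) * cis (- (2 * pi * real (f x) / real c))"
    (is "_ = ?K * _ * ?phase")
proof -
  define h where "h = (\<lambda>u. if u = z then ?K * cis (2 * pi * real u / real c) * ?phase else 0)"
  have c0: "0 < c" using assms by simp
  have "(if (y + f x) mod c = z then init_state n q c (x, y) else 0) = h ((f x + y) mod c)"
    if "y < c" for y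
  proof -
    have "cis (2 * pi * real ((f x + y) mod c) / real c) * ?phase = cis (2 * pi * real y / real c)"
      unfolding cis_mod[OF c0] by (simp add: cis_mult add_divide_distrib distrib_left)
    then show ?thesis
      using that assms(1) unfolding h_def init_state_def exp_eq_cis_frac by (auto simp: add.commute mult_ac)
  qed
  then have "apply_oracle f c (init_state n q c) (x, z) = (\<Sum>y<c. h ((f x + y) mod c))"
    unfolding apply_oracle_def by (auto intro: sum.cong)
  also have "\<dots> = (\<Sum>u<c. h u)" by (rule sum_rotate_mod[OF c0])
  also have "\<dots> = ?K * cis (2 * pi * real z / real c) * ?phase" unfolding h_def using assms(2) by simp
  finally show ?thesis .
qed

lemma qft_coef_eq:
  assumes "x \<in> vecs n q" "0 < q"
  shows "qft_coef n q y x = complex_of_real ((1 / sqrt (real q)) ^ n) * cis (2 * pi * real (ip q x y) / real q)"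
proof -
  have "qft_coef n q y x = complex_of_real ((1 / sqrt (real q)) ^ n) * cis (\<Sum>i<n. 2 * pi * real (x ! i * y ! i) / real q)"
    unfolding qft_coef_def exp_eq_cis_frac
    by (simp only: prod.distrib prod_constant prod_cis card_lessThan of_real_power)
  also have "(\<Sum>i<n. 2 * pi * real (x ! i * y ! i) / real q) = 2 * pi * real (\<Sum>i<n. x ! i * y ! i) / real q"
    by (simp add: sum_divide_distrib sum_distrib_left)
  also have "cis \<dots> = cis (2 * pi * real (ip q x y) / real q)"
    using assms unfolding ip_def vecs_def by (simp add: cis_mod)
  finally show ?thesis .
qed

(* For <x,k> = s: the factor w_q^s of the QFT at the outcome k times the phase w_c^(-LRF(x))
   kicked back by the oracle; (s + q - a) mod q is s - a in Z_q. *)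
definition lrf_phase :: "nat \<Rightarrow> nat \<Rightarrow> nat \<Rightarrow> nat \<Rightarrow> complex" where
  "lrf_phase q a b s =
     cis (2 * pi * real s / real q) * cis (- (2 * pi * real (((s + q - a) mod q) div b) / real (lrf_c q b)))"

lemma success_prob_eq_sum_ip:
  assumes "0 < b" "a < q"
  shows "success_prob n q a b k = (cmod (\<Sum>x\<in>vecs n q. lrf_phase q a b (ip q x k)))\<^sup>2 / (real q ^ n)\<^sup>2"
proof -
  define c where "c = lrf_c q b"
  define B where "B = (\<Sum>x\<in>vecs n q. lrf_phase q a b (ip q x k))"
  define K where "K = (1 / sqrt (real q)) ^ n * (1 / sqrt (real q ^ n) * (1 / sqrt (real c)))"
  have q0: "0 < q" using assms by simp
  have "0 < c * b" using lrf_c_mult_bounds(1)[OF assms(1), of q] q0 unfolding c_def by linarith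
  then have c0: "0 < c" by simp
  have amplitude: "(\<Sum>x\<in>vecs n q. qft_coef n q k x * apply_oracle (LRF q k a b) c (init_state n q c) (x, z))
      = complex_of_real K * cis (2 * pi * real z / real c) * B" if "z < c" for z
    unfolding B_def sum_distrib_left
  proof (rule sum.cong[OF refl])
    fix x assume x: "x \<in> vecs n q"
    show "qft_coef n q k x * apply_oracle (LRF q k a b) c (init_state n q c) (x, z)
        = complex_of_real K * cis (2 * pi * real z / real c) * lrf_phase q a b (ip q x k)"
      unfolding qft_coef_eq[OF x q0] apply_oracle_init_state[OF x that]
      unfolding LRF_eq[OF assms] lrf_phase_def K_def c_def
      by (simp add: mult_ac)
  qed
  have "(1 / sqrt (real q)) ^ n = 1 / sqrt (real q ^ n)" by (simp add: power_divide real_sqrt_power)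
  then have "K = 1 / real q ^ n * (1 / sqrt (real c))" unfolding K_def by simp
  then have K2: "K\<^sup>2 = 1 / (real q ^ n)\<^sup>2 / real c" by (simp add: power_mult_distrib power_divide)
  have "success_prob n q a b k = (\<Sum>z<c. (cmod (complex_of_real K * cis (2 * pi * real z / real c) * B))\<^sup>2)"
    unfolding success_prob_def Let_def c_def[symmetric] outcome_prob_def using amplitude by simp
  also have "\<dots> = real c * (K\<^sup>2 * (cmod B)\<^sup>2)" by (simp add: norm_mult power_mult_distrib)
  also have "\<dots> = (cmod B)\<^sup>2 / (real q ^ n)\<^sup>2" using K2 c0 by (simp add: field_simps)
  finally show ?thesis unfolding B_def .
qed

lemma finite_vecs: "finite (vecs n q)"
  and card_vecs: "card (vecs n q) = q ^ n"
proof -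
  have vecs: "vecs n q = {xs. set xs \<subseteq> {..<q} \<and> length xs = n}" unfolding vecs_def by auto
  show "finite (vecs n q)" unfolding vecs by (rule finite_lists_length_eq) simp
  show "card (vecs n q) = q ^ n" unfolding vecs by (simp add: card_lists_length_eq)
qed

lemma ip_list_update_shift:
  assumes "x \<in> vecs n q" "i < n" "[k ! i * u = 1] (mod q)"
  shows "ip q (x[i := (x ! i + m * u) mod q]) k = (ip q x k + m) mod q"
proof -
  define y where "y = (x ! i + m * u) mod q"
  define R where "R = (\<Sum>j\<in>{..<n} - {i}. x ! j * k ! j)"
  have len: "length x = n" using assms(1) unfolding vecs_def by simp
  have "(\<Sum>j<n. x ! j * k ! j) = x ! i * k ! i + R"
    unfolding R_def using assms(2) by (subst sum.remove[of _ i]) auto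
  moreover have "(\<Sum>j<n. x[i := y] ! j * k ! j) = y * k ! i + R"
    unfolding R_def using assms(2) len by (subst sum.remove[of _ i]) (auto intro!: sum.cong)
  moreover have "[y * k ! i = x ! i * k ! i + m * (k ! i * u)] (mod q)"
    unfolding y_def cong_def by (simp add: mod_mult_left_eq mod_mult_right_eq algebra_simps)
  moreover have "[x ! i * k ! i + m * (k ! i * u) = x ! i * k ! i + m] (mod q)"
    using cong_scalar_left[OF assms(3), of m] by (simp add: cong_add_lcancel_nat)
  ultimately show ?thesis
    unfolding ip_def y_def[symmetric] len length_list_update cong_def
    by (metis mod_add_left_eq add.commute add.left_commute)
qed

lemma bij_betw_shift_coordinate:
  assumes "i < n" "0 < q"
  shows "bij_betw (\<lambda>x. x[i := (x ! i + r) mod q]) (vecs n q) (vecs n q)"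
proof -
  let ?T = "\<lambda>x. x[i := (x ! i + r) mod q]"
  have "?T ` vecs n q \<subseteq> vecs n q"
    using assms set_update_subset_insert unfolding vecs_def by fastforce
  moreover have "inj_on ?T (vecs n q)"
  proof (rule inj_onI)
    fix x y assume xy: "x \<in> vecs n q" "y \<in> vecs n q" "?T x = ?T y"
    then have len: "length x = n" "length y = n" unfolding vecs_def by auto
    then have "x ! i < q" "y ! i < q"
      using xy(1,2) assms(1) nth_mem unfolding vecs_def by (metis lessThan_iff mem_Collect_eq subsetD)+
    moreover have "[x ! i + r = y ! i + r] (mod q)"
      using arg_cong[OF xy(3), of "\<lambda>z. z ! i"] assms(1) len unfolding cong_def by simp
    ultimately have "x ! i = y ! i" unfolding cong_add_rcancel_nat by (simp add: cong_def)
    then show "x = y" by (metis list_update_id list_update_overwrite xy(3))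
  qed
  ultimately show ?thesis by (simp add: bij_betw_def endo_inj_surj finite_vecs)
qed

lemma sum_vecs_ip_uniform:
  fixes g :: "nat \<Rightarrow> 'a::semiring_1"
  assumes "k \<in> vecs n q" "i < n" "coprime (k ! i) q" "0 < q"
  shows "of_nat q * (\<Sum>x\<in>vecs n q. g (ip q x k)) = of_nat (q ^ n) * (\<Sum>s<q. g s)"
proof -
  obtain u where u: "[k ! i * u = 1] (mod q)" using cong_solve_coprime_nat[OF assms(3)] by auto
  have shift: "(\<Sum>x\<in>vecs n q. g (ip q x k)) = (\<Sum>x\<in>vecs n q. g ((ip q x k + m) mod q))" for m
  proof -
    have "(\<Sum>x\<in>vecs n q. g (ip q x k)) = (\<Sum>x\<in>vecs n q. g (ip q (x[i := (x ! i + m * u) mod q]) k))"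
      by (rule sum.reindex_bij_betw[OF bij_betw_shift_coordinate[OF assms(2,4)], symmetric])
    also have "\<dots> = (\<Sum>x\<in>vecs n q. g ((ip q x k + m) mod q))"
      using ip_list_update_shift[OF _ assms(2) u] by (intro sum.cong) auto
    finally show ?thesis .
  qed
  have "of_nat q * (\<Sum>x\<in>vecs n q. g (ip q x k)) = (\<Sum>m<q. \<Sum>x\<in>vecs n q. g ((ip q x k + m) mod q))"
    using shift by simp
  also have "\<dots> = (\<Sum>x\<in>vecs n q. \<Sum>m<q. g ((ip q x k + m) mod q))" by (rule sum.swap)
  also have "\<dots> = (\<Sum>x\<in>vecs n q. \<Sum>s<q. g s)" by (simp add: sum_rotate_mod[OF assms(4)])
  also have "\<dots> = of_nat (q ^ n) * (\<Sum>s<q. g s)" by (simp add: card_vecs)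
  finally show ?thesis .
qed

lemma success_prob_eq_phase_sum:
  assumes "0 < b" "a < q" "k \<in> vecs n q" "i < n" "coprime (k ! i) q"
  shows "success_prob n q a b k = (cmod (\<Sum>s<q. lrf_phase q a b s) / real q)\<^sup>2"
proof -
  have q0: "0 < q" using assms by simp
  have "of_nat q * (\<Sum>x\<in>vecs n q. lrf_phase q a b (ip q x k)) = of_nat (q ^ n) * (\<Sum>s<q. lrf_phase q a b s)"
    by (rule sum_vecs_ip_uniform[OF assms(3-5) q0])
  then have "real q * cmod (\<Sum>x\<in>vecs n q. lrf_phase q a b (ip q x k)) = real q ^ n * cmod (\<Sum>s<q. lrf_phase q a b s)"
    by (metis norm_mult norm_of_nat of_nat_power)
  then have "cmod (\<Sum>x\<in>vecs n q. lrf_phase q a b (ip q x k)) / real q ^ n = cmod (\<Sum>s<q. lrf_phase q a b s) / real q"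
    using q0 by (simp add: field_simps)
  then show ?thesis unfolding success_prob_eq_sum_ip[OF assms(1,2)] power_divide[symmetric] by simp
qed

section \<open>Lower bound for the amplitude\<close>

lemma lrf_phase_shift:
  assumes "t < q" "a < q"
  shows "lrf_phase q a b ((a + t) mod q) = cis (2 * pi * real a / real q)
    * (cis (2 * pi * real t / real q) * cis (- (2 * pi * real (t div b) / real (lrf_c q b))))"
proof -
  have "cis (2 * pi * real ((a + t) mod q) / real q) = cis (2 * pi * real a / real q) * cis (2 * pi * real t / real q)"
    using assms by (simp add: cis_mod cis_mult add_divide_distrib distrib_left)
  then show ?thesis unfolding lrf_phase_def add_mod_diff_mod_cancel[OF assms] by (simp add: mult_ac)
qed

lemma norm_cis_div_sub_cis_mod_le:
  assumes "0 < b" "t < q"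
  shows "cmod (cis (2 * pi * real t / real q) * cis (- (2 * pi * real (t div b) / real (lrf_c q b)))
           - cis (2 * pi * real (t mod b) / real q)) \<le> 2 * pi * lrf_d q b / real q"
proof -
  define c where "c = lrf_c q b"
  define v where "v = real (t div b)"
  have cb: "q \<le> c * b" using lrf_c_mult_bounds(1)[OF assms(1)] unfolding c_def .
  then have "0 < c * b" using assms(2) by linarith
  then have c0: "0 < real c" by simp
  have "t div b < c" using assms(2) cb by (intro less_mult_imp_div_less) simp
  then have v: "0 \<le> v" "v / real c \<le> 1" unfolding v_def using c0 by simp_all
  have t: "real t = v * real b + real (t mod b)" unfolding v_def by (metis div_mult_mod_eq of_nat_add of_nat_mult)
  have "2 * pi * real t / real q - 2 * pi * v / real c - 2 * pi * real (t mod b) / real q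
      = 2 * pi * lrf_d q b / real q * (v / real c)"
    using assms c0 unfolding t lrf_d_def c_def by (simp add: field_simps)
  moreover have "0 \<le> 2 * pi * lrf_d q b / real q * (v / real c)"
    using v lrf_d_nonneg[OF assms(1), of q] by simp
  ultimately have "cmod (cis (2 * pi * real t / real q) * cis (- (2 * pi * v / real c)) - cis (2 * pi * real (t mod b) / real q))
      \<le> 2 * pi * lrf_d q b / real q * (v / real c)"
    using norm_cis_diff_le by (metis abs_of_nonneg cis_mult diff_conv_add_uminus)
  also have "\<dots> \<le> 2 * pi * lrf_d q b / real q"
    using v lrf_d_nonneg[OF assms(1), of q] by (intro mult_left_le) simp_all
  finally show ?thesis unfolding v_def c_def .
qed

lemma lrf_c_mult_sin_ge:
  assumes "0 < b" "b < q"
  shows "2 - pi * lrf_d q b / real q \<le> real (lrf_c q b) * sin (pi * real b / real q)"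
proof -
  define c where "c = lrf_c q b"
  have c0: "0 < real c" using lrf_c_ge_2[OF assms] unfolding c_def by simp
  have "real c * \<bar>pi / real c - pi * real b / real q\<bar> = \<bar>real c * (pi / real c - pi * real b / real q)\<bar>"
    using c0 by (simp add: abs_mult)
  also have "real c * (pi / real c - pi * real b / real q) = - (pi * lrf_d q b / real q)"
    unfolding lrf_d_def c_def using c0 assms by (simp add: field_simps c_def)
  finally have dist: "real c * \<bar>pi / real c - pi * real b / real q\<bar> = pi * lrf_d q b / real q"
    using lrf_d_nonneg[OF assms(1), of q] by simp
  have "2 \<le> real c * sin (pi / real c)" using two_le_mult_sin_pi_div lrf_c_ge_2[OF assms] unfolding c_def .
  also have "\<dots> \<le> real c * (sin (pi * real b / real q) + \<bar>pi / real c - pi * real b / real q\<bar>)"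
    using abs_sin_diff_le[of "pi / real c" "pi * real b / real q"] c0 by (intro mult_left_mono) auto
  finally have "2 \<le> real c * sin (pi * real b / real q) + real c * \<bar>pi / real c - pi * real b / real q\<bar>"
    by (simp add: distrib_left)
  then show ?thesis using dist unfolding c_def by linarith
qed

lemma norm_sum_cis_mod_ge:
  assumes "0 < b" "b < q"
  shows "2 * real q / pi - lrf_d q b \<le> cmod (\<Sum>t<lrf_c q b * b. cis (2 * pi * real (t mod b) / real q))"
proof -
  define c where "c = lrf_c q b"
  have "2 * real q / pi - lrf_d q b = real q * (2 - pi * lrf_d q b / real q) / pi"
    using assms by (simp add: field_simps)
  also have "\<dots> \<le> real q * (real c * sin (pi * real b / real q)) / pi"
    using lrf_c_mult_sin_ge[OF assms] unfolding c_def by (intro divide_right_mono mult_left_mono) auto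
  also have "\<dots> = real c * (real q * \<bar>sin (pi * real b / real q)\<bar> / pi)"
    using assms by (simp add: sin_ge_zero field_simps)
  also have "\<dots> \<le> real c * cmod (\<Sum>j<b. cis (2 * pi * real j / real q))"
    using assms by (intro mult_left_mono norm_sum_cis_ge) auto
  also have "\<dots> = cmod (\<Sum>t<c * b. cis (2 * pi * real (t mod b) / real q))"
    by (simp add: sum_mod_periodic[of "\<lambda>j. cis (2 * pi * real j / real q)"] norm_mult)
  finally show ?thesis unfolding c_def .
qed

lemma norm_sum_lrf_phase_ge:
  assumes "0 < b" "b < q" "a < q"
  shows "2 * real q / pi - (2 * pi + 2) * lrf_d q b \<le> cmod (\<Sum>s<q. lrf_phase q a b s)"
proof -
  define c where "c = lrf_c q b"
  define H where "H = (\<lambda>t. cis (2 * pi * real t / real q) * cis (- (2 * pi * real (t div b) / real c)))"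
  define J where "J = (\<lambda>t. cis (2 * pi * real (t mod b) / real q))"
  have cb: "q \<le> c * b" using lrf_c_mult_bounds(1)[OF assms(1)] unfolding c_def .
  have "(\<Sum>s<q. lrf_phase q a b s) = (\<Sum>t<q. lrf_phase q a b ((a + t) mod q))"
    using assms by (simp add: sum_rotate_mod)
  also have "\<dots> = cis (2 * pi * real a / real q) * (\<Sum>t<q. H t)"
    unfolding sum_distrib_left H_def c_def using assms(3) by (intro sum.cong) (simp_all add: lrf_phase_shift)
  finally have rotate: "cmod (\<Sum>s<q. lrf_phase q a b s) = cmod (\<Sum>t<q. H t)" by (simp add: norm_mult)
  have split: "(\<Sum>t<q. H t) = (\<Sum>t<c * b. J t) - (\<Sum>t\<in>{q..<c * b}. J t) + (\<Sum>t<q. H t - J t)"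
    using sum.atLeastLessThan_concat[of 0 q "c * b" J, symmetric] cb
    by (simp add: atLeast0LessThan sum_subtractf)
  have "cmod (\<Sum>t<q. H t - J t) \<le> (\<Sum>t<q. 2 * pi * lrf_d q b / real q)"
    unfolding H_def J_def c_def by (intro sum_norm_le norm_cis_div_sub_cis_mod_le[OF assms(1)]) simp
  also have "\<dots> = 2 * pi * lrf_d q b" using assms by simp
  finally have err: "cmod (\<Sum>t<q. H t - J t) \<le> 2 * pi * lrf_d q b" .
  have "cmod (\<Sum>t\<in>{q..<c * b}. J t) \<le> (\<Sum>t\<in>{q..<c * b}. 1)"
    unfolding J_def by (intro sum_norm_le) simp
  also have "\<dots> = lrf_d q b" unfolding lrf_d_def using cb by (simp add: c_def)
  finally have tail: "cmod (\<Sum>t\<in>{q..<c * b}. J t) \<le> lrf_d q b" .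
  have "cmod (\<Sum>t<c * b. J t) = cmod ((\<Sum>t<q. H t) + (\<Sum>t\<in>{q..<c * b}. J t) - (\<Sum>t<q. H t - J t))"
    unfolding split by simp
  also have "\<dots> \<le> cmod ((\<Sum>t<q. H t) + (\<Sum>t\<in>{q..<c * b}. J t)) + cmod (\<Sum>t<q. H t - J t)"
    by (rule norm_triangle_ineq4)
  also have "\<dots> \<le> cmod (\<Sum>t<q. H t) + cmod (\<Sum>t\<in>{q..<c * b}. J t) + cmod (\<Sum>t<q. H t - J t)"
    using norm_triangle_ineq by simp
  finally have "cmod (\<Sum>t<c * b. J t)
      \<le> cmod (\<Sum>t<q. H t) + cmod (\<Sum>t\<in>{q..<c * b}. J t) + cmod (\<Sum>t<q. H t - J t)" .
  moreover have "(2 * pi + 2) * lrf_d q b = 2 * pi * lrf_d q b + 2 * lrf_d q b" by (simp add: algebra_simps)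
  ultimately show ?thesis
    using norm_sum_cis_mod_ge[OF assms(1,2)] err tail rotate unfolding J_def c_def by linarith
qed

lemma sq_ge_of_ge_diff:
  fixes x y e :: real
  assumes "y - e \<le> x" "0 \<le> y" "0 \<le> e"
  shows "y\<^sup>2 - 2 * y * e \<le> x\<^sup>2"
proof (cases "0 \<le> y - e")
  case True
  then have "(y - e)\<^sup>2 \<le> x\<^sup>2" using assms(1) by (intro power_mono) auto
  moreover have "(y - e)\<^sup>2 = y\<^sup>2 - 2 * y * e + e\<^sup>2" by (simp add: power2_diff)
  ultimately show ?thesis using zero_le_power2[of e] by linarith
next
  case False
  then have "y * (y - 2 * e) \<le> 0" using assms by (intro mult_nonneg_nonpos) auto
  moreover have "y * (y - 2 * e) = y\<^sup>2 - 2 * y * e" by (simp add: power2_eq_square algebra_simps)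
  ultimately show ?thesis using zero_le_power2[of x] by linarith
qed

theorem theorem9:
  shows "\<exists>C::real. \<forall>n q b a k.
     1 \<le> n \<longrightarrow> 2 \<le> q \<longrightarrow> 1 \<le> b \<longrightarrow> b < q \<longrightarrow> a < q \<longrightarrow>
     k \<in> vecs n q \<longrightarrow> (\<exists>i<n. coprime (k ! i) q) \<longrightarrow>
     success_prob n q a b k \<ge> 4 / pi\<^sup>2 - C * (real (lrf_c q b * b) - real q) / real q"
proof (intro exI allI impI)
  fix n q b a :: nat and k :: "nat list"
  assume "1 \<le> n" "2 \<le> q" "1 \<le> b" "b < q" "a < q" "k \<in> vecs n q" "\<exists>i<n. coprime (k ! i) q"
  then obtain i where setting: "0 < b" "b < q" "a < q" "k \<in> vecs n q" "i < n" "coprime (k ! i) q" by auto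
  define e where "e = (2 * pi + 2) * lrf_d q b / real q"
  have "(2 * real q / pi - (2 * pi + 2) * lrf_d q b) / real q \<le> cmod (\<Sum>s<q. lrf_phase q a b s) / real q"
    using norm_sum_lrf_phase_ge[OF setting(1-3)] by (intro divide_right_mono) auto
  then have "2 / pi - e \<le> cmod (\<Sum>s<q. lrf_phase q a b s) / real q"
    using setting(2) unfolding e_def by (simp add: diff_divide_distrib)
  then have "(2 / pi)\<^sup>2 - 2 * (2 / pi) * e \<le> success_prob n q a b k"
    unfolding success_prob_eq_phase_sum[OF setting(1,3-6)] e_def
    using lrf_d_nonneg[OF setting(1), of q] setting(2) by (intro sq_ge_of_ge_diff) auto
  then show "4 / pi\<^sup>2 - 4 * (2 * pi + 2) / pi * (real (lrf_c q b * b) - real q) / real q \<le> success_prob n q a b k"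
    unfolding e_def lrf_d_def by (simp add: power2_eq_square field_simps)
qed

end
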